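(* In the standing setting below, for every set $\mathcal{O}'$ of popular sets with $|\mathcal{O}'|\le\kappa$ there is a single $b$-path-system $\mathcal{P}$ that witnesses the popularity of every $O\in\mathcal{O}'$ simultaneously.
   Context: Standing setting: $M,N$ are finitary matroids on a common ground set $E$; $I\in\mathcal{I}(M)\cap\mathcal{I}(N)$ is maximal among common independent sets; $\kappa:=r(N/I)$ is an uncountable regular cardinal and $r(M/I)<\kappa$. Fix a base $J_M$ of $M/I$ and a base $J_N$ of $N/I$, put $B_M:=I\cup J_M$, $B_N:=I\cup J_N$, $b:=(B_M,B_N)$. For a base $B$ of a matroid $M$, $D_M(B)$ is the digraph on $E$ with arc $ef$ iff $e\notin B$ and $f\in C_M(e,B)\setminus\{e\}$ ($C_M(e,B)$ the fundamental circuit); $D(b):=D_M(B_M)\cup D_N^{-1}(B_N)$ where $D^{-1}$ reverses all arcs. A $b$-path is a finite directed path $P$ in $D(b)$ whose initial vertex lies in $B_N\setminus B_M$ (single vertices allowed); $\mathsf{ter}(P)$ is its terminal vertex and $\mathsf{ter}(\mathcal{P})=\{\mathsf{ter}(P):P\in\mathcal{P}\}$. A $b$-path-system is a set of $\kappa$ pairwise disjoint $b$-paths. A $\Delta$-system is a family of sets any two of which intersect in the same set $K$ (the kernel); its petals are $C\setminus K$. A nonempty $K\subseteq E$ is popular if there exist a $b$-path-system $\mathcal{P}$ and a $\Delta$-system $\mathcal{D}$ of $\kappa$ many circuits of $M$ with kernel $K$ such that every petal of $\mathcal{D}$ is contained in $I\cup\mathsf{ter}(\mathcal{P})$; such $\mathcal{P}$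 witnesses the popularity of $K$. *)

theory Defs
  imports Main
begin

definition finitary_matroid :: "'a set \<Rightarrow> ('a set \<Rightarrow> bool) \<Rightarrow> bool" where
  "finitary_matroid E ind \<longleftrightarrow>
     (\<forall>X. ind X \<longrightarrow> X \<subseteq> E) \<and> ind {} \<and>
     (\<forall>X Y. ind X \<and> Y \<subseteq> X \<longrightarrow> ind Y) \<and>
     (\<forall>X Y. finite X \<and> finite Y \<and> ind X \<and> ind Y \<and> card X < card Y
            \<longrightarrow> (\<exists>y\<in>Y - X. ind (insert y X))) \<and>
     (\<forall>X. X \<subseteq> E \<and> (\<forall>F. F \<subseteq> X \<and> finite F \<longrightarrow> ind F) \<longrightarrow> ind X)"

definition circuit :: "'a set \<Rightarrow> ('a set \<Rightarrow> bool) \<Rightarrow> 'a set \<Rightarrow> bool" where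
  "circuit E ind C \<longleftrightarrow> C \<subseteq> E \<and> \<not> ind C \<and> (\<forall>D. D \<subset> C \<longrightarrow> ind D)"

definition base :: "('a set \<Rightarrow> bool) \<Rightarrow> 'a set \<Rightarrow> bool" where
  "base ind B \<longleftrightarrow> ind B \<and> (\<forall>X. ind X \<and> B \<subseteq> X \<longrightarrow> X = B)"

definition contract_ind :: "('a set \<Rightarrow> bool) \<Rightarrow> 'a set \<Rightarrow> 'a set \<Rightarrow> bool" where
  "contract_ind ind I X \<longleftrightarrow> X \<inter> I = {} \<and> ind (X \<union> I)"

definition fund_circuit :: "'a set \<Rightarrow> ('a set \<Rightarrow> bool) \<Rightarrow> 'a set \<Rightarrow> 'a \<Rightarrow> 'a set" where
  "fund_circuit E ind B e = (THE C. circuit E ind C \<and> C \<subseteq> insert e B)"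

definition D_arc :: "'a set \<Rightarrow> ('a set \<Rightarrow> bool) \<Rightarrow> 'a set \<Rightarrow> 'a \<Rightarrow> 'a \<Rightarrow> bool" where
  "D_arc E ind B e f \<longleftrightarrow> e \<in> E \<and> e \<notin> B \<and> f \<in> fund_circuit E ind B e - {e}"

definition Db_arc :: "'a set \<Rightarrow> ('a set \<Rightarrow> bool) \<Rightarrow> ('a set \<Rightarrow> bool) \<Rightarrow> 'a set \<Rightarrow> 'a set
                     \<Rightarrow> 'a \<Rightarrow> 'a \<Rightarrow> bool" where
  "Db_arc E indM indN BM BN e f \<longleftrightarrow> D_arc E indM BM e f \<or> D_arc E indN BN f e"

definition b_path :: "'a set \<Rightarrow> ('a set \<Rightarrow> bool) \<Rightarrow> ('a set \<Rightarrow> bool) \<Rightarrow> 'a set \<Rightarrow> 'a set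
                     \<Rightarrow> 'a list \<Rightarrow> bool" where
  "b_path E indM indN BM BN p \<longleftrightarrow>
     p \<noteq> [] \<and> distinct p \<and> hd p \<in> BN - BM \<and> successively (Db_arc E indM indN BM BN) p"

definition path_system :: "'a set \<Rightarrow> ('a set \<Rightarrow> bool) \<Rightarrow> ('a set \<Rightarrow> bool) \<Rightarrow> 'a set \<Rightarrow> 'a set
                     \<Rightarrow> 'k rel \<Rightarrow> 'a list set \<Rightarrow> bool" where
  "path_system E indM indN BM BN kappa P \<longleftrightarrow>
     (\<forall>p\<in>P. b_path E indM indN BM BN p) \<and>
     (\<forall>p\<in>P. \<forall>q\<in>P. p \<noteq> q \<longrightarrow> set p \<inter> set q = {}) \<and>
     (card_of P, kappa) \<in> ordIso"

definition witnesses_popular :: "'a set \<Rightarrow> ('a set \<Rightarrow> bool) \<Rightarrow> ('a set \<Rightarrow> bool) \<Rightarrow> 'a set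
                     \<Rightarrow> 'a set \<Rightarrow> 'a set \<Rightarrow> 'k rel \<Rightarrow> 'a list set \<Rightarrow> 'a set \<Rightarrow> bool" where
  "witnesses_popular E indM indN I BM BN kappa P K \<longleftrightarrow>
     path_system E indM indN BM BN kappa P \<and>
     (\<exists>\<D>. (\<forall>C\<in>\<D>. circuit E indM C) \<and> (card_of \<D>, kappa) \<in> ordIso \<and>
          (\<forall>C\<in>\<D>. \<forall>C'\<in>\<D>. C \<noteq> C' \<longrightarrow> C \<inter> C' = K) \<and>
          (\<forall>C\<in>\<D>. C - K \<subseteq> I \<union> last ` P))"

definition popular :: "'a set \<Rightarrow> ('a set \<Rightarrow> bool) \<Rightarrow> ('a set \<Rightarrow> bool) \<Rightarrow> 'a set
                     \<Rightarrow> 'a set \<Rightarrow> 'a set \<Rightarrow> 'k rel \<Rightarrow> 'a set \<Rightarrow> bool" where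
  "popular E indM indN I BM BN kappa K \<longleftrightarrow>
     K \<noteq> {} \<and> (\<exists>P. witnesses_popular E indM indN I BM BN kappa P K)"

end

(* Schedule every popular set K at |J_N| = kappa many stages (possible since at most kappa sets
   are given) and run through the stages by transfinite recursion. At a stage for K choose a
   member C of the Delta-system of K not chosen before, the finitely many paths of the system
   witnessing K that end in the petal of C, and one fresh element of J_N - J_M as a singleton
   path, all avoiding the vertices used at earlier stages. Fewer than kappa finite choices
   precede a stage, and a vertex lies on at most one path, whose end lies in at most one petal;
   so fewer than kappa members of the Delta-system are excluded. The union of all chosen paths
   is a single b-path-system witnessing every K. *)

theory Submission
  imports Defs
begin

unbundle cardinal_syntax

abbreviation vertices :: "'v list set \<Rightarrow> 'v set" where
  "vertices P \<equiv> \<Union> (set ` P)"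

abbreviation vertex_disjoint :: "'v list set \<Rightarrow> bool" where
  "vertex_disjoint P \<equiv> \<forall>p\<in>P. \<forall>q\<in>P. p \<noteq> q \<longrightarrow> set p \<inter> set q = {}"

definition delta_system :: "'v set set \<Rightarrow> 'v set \<Rightarrow> bool" where
  "delta_system \<D> K \<longleftrightarrow> (\<forall>C\<in>\<D>. \<forall>C'\<in>\<D>. C \<noteq> C' \<longrightarrow> C \<inter> C' = K)"

lemma delta_system_subset:
  "delta_system \<D> K \<Longrightarrow> \<D>' \<subseteq> \<D> \<Longrightarrow> delta_system \<D>' K"
  unfolding delta_system_def by blast

lemma card_of_ordIso_if_Diff_nonempty:
  assumes "X \<subseteq> B" and "\<And>U. |U| <o |B| \<Longrightarrow> X - U \<noteq> {}"
  shows "|X| =o |B|"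
proof -
  have "|X| \<le>o |B|" using assms(1) by (rule card_of_mono1)
  moreover have "\<not> |X| <o |B|" using assms(2)[of X] by blast
  ultimately show ?thesis using ordLeq_iff_ordLess_or_ordIso by blast
qed

lemma finite_ordLess_infinite_Field:
  assumes "Card_order r" "infinite (Field r)" "finite A"
  shows "|A| <o r"
  using assms finite_ordLess_infinite[OF card_of_Well_order card_order_on_well_order_on]
  by (simp add: Field_card_of)

lemma card_of_UN_finite_ordLess:
  assumes r: "Card_order r" "infinite (Field r)"
    and T: "|T| <o r" and fin: "\<And>t. t \<in> T \<Longrightarrow> finite (A t)"
  shows "|\<Union>t\<in>T. A t| <o r"
proof (cases "finite T")
  case True
  then have "finite (\<Union>t\<in>T. A t)" using fin by blast
  then show ?thesis by (rule finite_ordLess_infinite_Field[OF r])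
next
  case False
  have "|\<Union>t\<in>T. A t| \<le>o |T|"
  proof (rule card_of_UNION_ordLeq_infinite[OF False])
    show "|T| \<le>o |T|" by (rule ordIso_imp_ordLeq[OF card_of_refl])
    show "\<forall>t\<in>T. |A t| \<le>o |T|"
      using fin False
      by (metis Field_card_of card_of_Well_order finite_ordLess_infinite ordLess_imp_ordLeq)
  qed
  then show ?thesis using T ordLeq_ordLess_trans by blast
qed

lemma Diff_nonempty_if_ordLess:
  assumes "|A| <o |B|"
  shows "B - A \<noteq> {}"
  using assms card_of_mono1 not_ordLess_ordLeq by fastforce

lemma exists_map_with_large_fibres:
  assumes A: "infinite A" and B: "B \<noteq> {}" "|B| \<le>o |A|"
  obtains h where "h ` A \<subseteq> B" "\<And>b. b \<in> B \<Longrightarrow> |A| \<le>o |{a \<in> A. h a = b}|"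
proof -
  have "|B \<times> A| \<le>o |A|"
    using card_of_Times_infinite[OF A B] ordIso_imp_ordLeq by blast
  moreover have "B \<times> A \<noteq> {}" using A B(1) by auto
  ultimately obtain g where g: "g ` A = B \<times> A" using card_of_ordLeq2 by metis
  show thesis
  proof
    have "fst ` g ` A \<subseteq> B" unfolding g by auto
    then show "(fst \<circ> g) ` A \<subseteq> B" by (simp add: image_comp)
    fix b assume "b \<in> B"
    have "A \<subseteq> (snd \<circ> g) ` {a \<in> A. (fst \<circ> g) a = b}"
    proof
      fix a' assume "a' \<in> A"
      then have "(b, a') \<in> g ` A" unfolding g using \<open>b \<in> B\<close> by simp
      then obtain a where "a \<in> A" "g a = (b, a')" by (metis imageE)
      then show "a' \<in> (snd \<circ> g) ` {a \<in> A. (fst \<circ> g) a = b}"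
        by (intro image_eqI[where x = a]) simp_all
    qed
    then show "|A| \<le>o |{a \<in> A. (fst \<circ> g) a = b}|"
      by (rule ordLeq_transitive[OF card_of_mono1 card_of_image])
  qed
qed

lemma wo_rel_recursive_choice:
  assumes "Well_order r"
    and step: "\<And>s g. s \<in> Field r \<Longrightarrow> (\<And>t. t \<in> underS r s \<Longrightarrow> ok t (g ` underS r t) (g t))
      \<Longrightarrow> \<exists>x. ok s (g ` underS r s) x"
  obtains f where "\<And>s. s \<in> Field r \<Longrightarrow> ok s (f ` underS r s) (f s)"
proof -
  interpret wo_rel r using assms(1) by (rule wo_rel.intro)
  define H where "H g s = (SOME x. ok s (g ` underS s) x)" for g s
  define f where "f = worec H"
  have "adm_wo H"
    unfolding adm_wo_def H_def by (metis image_cong)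
  then have f_eq: "f s = (SOME x. ok s (f ` underS s) x)" for s
    unfolding f_def by (metis worec_fixpoint H_def)
  have "s \<in> Field r \<longrightarrow> ok s (f ` underS s) (f s)" for s
  proof (induction s rule: well_order_induct)
    case (1 s)
    have "ok t (f ` underS t) (f t)" if "t \<in> underS s" for t
      using 1 that by (auto simp: underS_def Field_def)
    then show ?case
      using step[of s f] f_eq by (metis someI_ex)
  qed
  then show thesis using that by blast
qed

lemma inj_on_last_vertex_disjoint:
  assumes "[] \<notin> P" "vertex_disjoint P"
  shows "inj_on last P"
proof (rule inj_onI)
  fix p q assume "p \<in> P" "q \<in> P" "last p = last q"
  then have "last p \<in> set p \<inter> set q"
    using assms(1) by (metis IntI last_in_set)
  then show "p = q" using assms(2) \<open>p \<in> P\<close> \<open>q \<in> P\<close> by blast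
qed

lemma finite_if_subsingleton:
  assumes "\<And>x y. x \<in> A \<Longrightarrow> y \<in> A \<Longrightarrow> x = y"
  shows "finite A"
  using assms by (metis finite.simps subsetI singletonI subset_singletonD finite_subset)

lemma delta_system_member_avoiding:
  fixes r :: "'s rel" and \<D> :: "'v set set" and P :: "'v list set"
  assumes r: "Card_order r" "infinite (Field r)"
    and P_ne: "[] \<notin> P" and P_disj: "vertex_disjoint P"
    and D_large: "r \<le>o |\<D>|" and D_delta: "delta_system \<D> K"
    and D_fin: "\<And>C. C \<in> \<D> \<Longrightarrow> finite C"
    and D_petals: "\<And>C. C \<in> \<D> \<Longrightarrow> C - K \<subseteq> I \<union> last ` P"
    and U: "|U| <o r" and used: "|\<C>| <o r"
  obtains C Q where "C \<in> \<D>" "C \<notin> \<C>" "Q \<subseteq> P" "finite Q" "C - K \<subseteq> I \<union> last ` Q"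
    "vertices Q \<inter> U = {}"
proof -
  define hit where "hit u = {C \<in> \<D>. \<exists>p\<in>P. u \<in> set p \<and> last p \<in> C - K}" for u
  have "finite (hit u)" for u
  proof (rule finite_if_subsingleton)
    fix C C' assume "C \<in> hit u" "C' \<in> hit u"
    then obtain p p' where "p \<in> P" "p' \<in> P" "u \<in> set p \<inter> set p'"
        "last p \<in> C - K" "last p' \<in> C' - K" "C \<in> \<D>" "C' \<in> \<D>"
      unfolding hit_def by blast
    moreover from this have "p = p'" using P_disj by blast
    ultimately show "C = C'" using D_delta unfolding delta_system_def by blast
  qed
  then have "|\<Union>u\<in>U. hit u| <o r"
    by (rule card_of_UN_finite_ordLess[OF r U])
  then have "|\<C> \<union> (\<Union>u\<in>U. hit u)| <o r"
    by (rule card_of_Un_ordLess_infinite_Field[OF r(2) r(1) used])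
  then obtain C where C: "C \<in> \<D>" "C \<notin> \<C>" "C \<notin> (\<Union>u\<in>U. hit u)"
    using Diff_nonempty_if_ordLess ordLess_ordLeq_trans[OF _ D_large] by blast
  define Q where "Q = {p \<in> P. last p \<in> C - K}"
  have "finite (last ` Q)"
    using D_fin[OF C(1)] by (rule finite_subset[rotated]) (auto simp: Q_def)
  moreover have "inj_on last Q"
    using inj_on_last_vertex_disjoint[OF P_ne P_disj] by (rule inj_on_subset) (auto simp: Q_def)
  ultimately have "finite Q" by (rule finite_imageD)
  moreover have "C - K \<subseteq> I \<union> last ` Q"
    using D_petals[OF C(1)] by (auto simp: Q_def)
  moreover have "vertices Q \<inter> U = {}"
    using C(1,3) by (auto simp: Q_def hit_def)
  moreover have "Q \<subseteq> P" by (simp add: Q_def)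
  ultimately show thesis using that C(1,2) by blast
qed

lemma delta_stage_choice:
  fixes r :: "'s rel" and \<D> :: "'v set set" and P :: "'v list set"
  assumes r: "Card_order r" "infinite (Field r)"
    and X: "\<And>U. |U| <o r \<Longrightarrow> X - U \<noteq> {}"
    and P_ne: "[] \<notin> P" and P_disj: "vertex_disjoint P"
    and D_large: "r \<le>o |\<D>|" and D_delta: "delta_system \<D> K"
    and D_fin: "\<And>C. C \<in> \<D> \<Longrightarrow> finite C"
    and D_petals: "\<And>C. C \<in> \<D> \<Longrightarrow> C - K \<subseteq> I \<union> last ` P"
    and U: "|U| <o r" and used: "|\<C>| <o r"
  obtains C Q e where "C \<in> \<D>" "C \<notin> \<C>" "Q \<subseteq> P" "finite Q" "C - K \<subseteq> I \<union> last ` Q"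
    "e \<in> X" "e \<notin> vertices Q" "insert e (vertices Q) \<inter> U = {}"
proof -
  obtain C Q where CQ: "C \<in> \<D>" "C \<notin> \<C>" "Q \<subseteq> P" "finite Q" "C - K \<subseteq> I \<union> last ` Q"
      "vertices Q \<inter> U = {}"
    using delta_system_member_avoiding[OF r P_ne P_disj D_large D_delta D_fin D_petals U used] .
  have "finite (vertices Q)" using CQ(4) by blast
  then have "|U \<union> vertices Q| <o r"
    using card_of_Un_ordLess_infinite_Field[OF r(2) r(1) U] finite_ordLess_infinite_Field[OF r]
    by blast
  then obtain e where e: "e \<in> X" "e \<notin> U" "e \<notin> vertices Q" using X by blast
  have "insert e (vertices Q) \<inter> U = {}" using CQ(6) e(2) by blast
  with CQ(1-5) e(1,3) show thesis by (rule that)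
qed

lemma transfinite_delta_selection:
  fixes r :: "'s rel" and P :: "'s \<Rightarrow> 'v list set" and \<D> :: "'s \<Rightarrow> 'v set set"
    and K :: "'s \<Rightarrow> 'v set"
  assumes r: "Card_order r" "infinite (Field r)"
    and X: "\<And>U. |U| <o r \<Longrightarrow> X - U \<noteq> {}"
    and P_ne: "\<And>s. s \<in> Field r \<Longrightarrow> [] \<notin> P s"
    and P_disj: "\<And>s. s \<in> Field r \<Longrightarrow> vertex_disjoint (P s)"
    and D_large: "\<And>s. s \<in> Field r \<Longrightarrow> r \<le>o |\<D> s|"
    and D_delta: "\<And>s. s \<in> Field r \<Longrightarrow> delta_system (\<D> s) (K s)"
    and D_fin: "\<And>s C. s \<in> Field r \<Longrightarrow> C \<in> \<D> s \<Longrightarrow> finite C"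
    and D_petals: "\<And>s C. s \<in> Field r \<Longrightarrow> C \<in> \<D> s \<Longrightarrow> C - K s \<subseteq> I \<union> last ` P s"
  obtains C Q e where
    "\<And>s. s \<in> Field r \<Longrightarrow> C s \<in> \<D> s \<and> Q s \<subseteq> P s \<and> finite (Q s) \<and>
       C s - K s \<subseteq> I \<union> last ` Q s \<and> e s \<in> X \<and> e s \<notin> vertices (Q s)"
    "\<And>s t. s \<in> Field r \<Longrightarrow> t \<in> Field r \<Longrightarrow> s \<noteq> t \<Longrightarrow>
       C s \<noteq> C t \<and> insert (e s) (vertices (Q s)) \<inter> insert (e t) (vertices (Q t)) = {}"
proof -
  define used :: "'v set \<times> 'v list set \<times> 'v \<Rightarrow> 'v set" where
    "used = (\<lambda>(C, Q, e). insert e (vertices Q))"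
  define good where "good = (\<lambda>s (C, Q, e).
    C \<in> \<D> s \<and> Q \<subseteq> P s \<and> finite Q \<and> C - K s \<subseteq> I \<union> last ` Q \<and> e \<in> X \<and> e \<notin> vertices Q)"
  define ok where "ok s A x \<longleftrightarrow> good s x \<and> fst x \<notin> fst ` A \<and> used x \<inter> \<Union> (used ` A) = {}"
    for s A x
  have "\<exists>x. ok s (g ` underS r s) x"
    if s: "s \<in> Field r" and earlier: "\<And>t. t \<in> underS r s \<Longrightarrow> ok t (g ` underS r t) (g t)"
    for s g
  proof -
    have "finite (used (g t))" if "t \<in> underS r s" for t
      using earlier[OF that] by (auto simp: ok_def good_def used_def split: prod.splits)
    then have U: "|\<Union> (used ` g ` underS r s)| <o r"
      using card_of_UN_finite_ordLess[OF r card_of_underS[OF r(1) s], of "\<lambda>t. used (g t)"]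
      by (simp add: image_image)
    have Ch: "|fst ` g ` underS r s| <o r"
      using card_of_image ordLeq_ordLess_trans card_of_underS[OF r(1) s] by (metis image_image)
    obtain C Q e where "C \<in> \<D> s" "C \<notin> fst ` g ` underS r s" "Q \<subseteq> P s" "finite Q"
        "C - K s \<subseteq> I \<union> last ` Q" "e \<in> X" "e \<notin> vertices Q"
        "insert e (vertices Q) \<inter> \<Union> (used ` g ` underS r s) = {}"
      using delta_stage_choice[OF r X P_ne[OF s] P_disj[OF s] D_large[OF s] D_delta[OF s]
          D_fin[OF s] D_petals[OF s] U Ch] .
    then show ?thesis
      by (intro exI[of _ "(C, Q, e)"]) (auto simp: ok_def good_def used_def)
  qed
  then obtain f where f: "\<And>s. s \<in> Field r \<Longrightarrow> ok s (f ` underS r s) (f s)"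
    using wo_rel_recursive_choice[OF card_order_on_well_order_on[OF r(1)], of ok] by blast
  define C where "C s = fst (f s)" for s
  define Q where "Q s = fst (snd (f s))" for s
  define e where "e s = snd (snd (f s))" for s
  have used_f: "used (f s) = insert (e s) (vertices (Q s))" for s
    by (simp add: used_def Q_def e_def split: prod.splits)
  have local: "C s \<in> \<D> s \<and> Q s \<subseteq> P s \<and> finite (Q s) \<and> C s - K s \<subseteq> I \<union> last ` Q s \<and>
      e s \<in> X \<and> e s \<notin> vertices (Q s)" if "s \<in> Field r" for s
    using f[OF that] by (simp add: ok_def good_def C_def Q_def e_def split: prod.splits)
  have earlier: "C s \<noteq> C t \<and> insert (e s) (vertices (Q s)) \<inter> insert (e t) (vertices (Q t)) = {}"
    if "s \<in> Field r" "t \<in> underS r s" for s t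
  proof -
    have "C s \<notin> C ` underS r s" "used (f s) \<inter> \<Union> (used ` f ` underS r s) = {}"
      using f[OF that(1)] by (simp_all add: ok_def C_def image_image)
    moreover have "C t \<in> C ` underS r s" "used (f t) \<subseteq> \<Union> (used ` f ` underS r s)"
      using that(2) by auto
    ultimately have "C s \<noteq> C t" "used (f s) \<inter> used (f t) = {}" by auto
    then show ?thesis unfolding used_f by blast
  qed
  have "C s \<noteq> C t \<and> insert (e s) (vertices (Q s)) \<inter> insert (e t) (vertices (Q t)) = {}"
    if "s \<in> Field r" "t \<in> Field r" "s \<noteq> t" for s t
  proof -
    have "(s, t) \<in> r \<or> (t, s) \<in> r"
      using wo_rel.TOTALS[OF wo_rel.intro[OF card_order_on_well_order_on[OF r(1)]]] that(1,2)
      by blast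
    then have "t \<in> underS r s \<or> s \<in> underS r t"
      using that(3) by (auto simp: underS_def)
    then show ?thesis
      using earlier[OF that(1)] earlier[OF that(2)] by (metis Int_commute)
  qed
  with local show thesis by (rule that)
qed

lemma circuit_finite:
  assumes M: "finitary_matroid E ind" and C: "circuit E ind C"
  shows "finite C"
proof (rule ccontr)
  assume "infinite C"
  then have "\<forall>F. F \<subseteq> C \<and> finite F \<longrightarrow> ind F"
    using C unfolding circuit_def by blast
  then have "ind C" using M C unfolding finitary_matroid_def circuit_def by blast
  then show False using C unfolding circuit_def by blast
qed

lemma b_path_singleton:
  assumes "e \<in> BN - BM"
  shows "b_path E indM indN BM BN [e]"
  using assms unfolding b_path_def by simp

lemma path_system_singletons:
  assumes X: "X \<subseteq> BN - BM" and card: "|X| =o \<kappa>"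
  shows "path_system E indM indN BM BN \<kappa> ((\<lambda>e. [e]) ` X)"
proof -
  have "|X| =o |(\<lambda>e. [e]) ` X|"
    by (rule card_of_ordIsoI[of "\<lambda>e. [e]"]) (simp add: bij_betw_def inj_on_def)
  then have "|(\<lambda>e. [e]) ` X| =o \<kappa>" using card by (rule ordIso_transitive[OF ordIso_symmetric])
  moreover have "\<forall>p\<in>(\<lambda>e. [e]) ` X. b_path E indM indN BM BN p"
    using X by (auto intro!: b_path_singleton)
  ultimately show ?thesis unfolding path_system_def by simp
qed

lemma path_system_fresh_union:
  fixes S :: "'s set"
  assumes S: "infinite S"
    and e: "\<And>s. s \<in> S \<Longrightarrow> e s \<in> BN - BM \<and> e s \<notin> vertices (Q s)"
    and Q: "\<And>s. s \<in> S \<Longrightarrow>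
      (\<forall>p\<in>Q s. b_path E indM indN BM BN p) \<and> vertex_disjoint (Q s) \<and> finite (Q s)"
    and disj: "\<And>s t. s \<in> S \<Longrightarrow> t \<in> S \<Longrightarrow> s \<noteq> t \<Longrightarrow>
      insert (e s) (vertices (Q s)) \<inter> insert (e t) (vertices (Q t)) = {}"
  shows "path_system E indM indN BM BN |S| (\<Union>s\<in>S. insert [e s] (Q s))"
proof -
  let ?P = "\<Union>s\<in>S. insert [e s] (Q s)"
  have on_stage: "set p \<subseteq> insert (e s) (vertices (Q s))" if "p \<in> insert [e s] (Q s)" for p s
    using that by auto
  have same_stage: "set p \<inter> set q = {}"
    if "s \<in> S" "p \<in> insert [e s] (Q s)" "q \<in> insert [e s] (Q s)" "p \<noteq> q" for s p q
  proof -
    from that(2-4) consider "p \<in> Q s" "q \<in> Q s" | "p = [e s]" "q \<in> Q s" | "p \<in> Q s" "q = [e s]"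
      by auto
    then show ?thesis using e[OF that(1)] Q[OF that(1)] that(4) by cases auto
  qed
  have "vertex_disjoint ?P"
  proof (intro ballI impI)
    fix p q assume "p \<in> ?P" "q \<in> ?P" "p \<noteq> q"
    then obtain s t where st: "s \<in> S" "t \<in> S" "p \<in> insert [e s] (Q s)" "q \<in> insert [e t] (Q t)"
      by blast
    show "set p \<inter> set q = {}"
    proof (cases "s = t")
      case True
      then show ?thesis using same_stage st \<open>p \<noteq> q\<close> by blast
    next
      case False
      then show ?thesis using disj[OF st(1,2) False] on_stage[OF st(3)] on_stage[OF st(4)] by blast
    qed
  qed
  moreover have "|?P| \<le>o |S|"
  proof (rule card_of_UNION_ordLeq_infinite[OF S])
    show "|S| \<le>o |S|" by (rule ordIso_imp_ordLeq[OF card_of_refl])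
    have "|insert [e s] (Q s)| <o |S|" if "s \<in> S" for s
      using Q[OF that] S
      by (intro finite_ordLess_infinite_Field[OF card_of_Card_order]) (simp_all add: Field_card_of)
    then show "\<forall>s\<in>S. |insert [e s] (Q s)| \<le>o |S|" using ordLess_imp_ordLeq by blast
  qed
  moreover have "|S| \<le>o |?P|"
  proof (rule card_of_ordLeqI[of "\<lambda>s. [e s]"])
    show "inj_on (\<lambda>s. [e s]) S" using disj by (auto simp: inj_on_def)
  qed auto
  moreover have "\<forall>p\<in>?P. b_path E indM indN BM BN p"
    using e Q by (auto intro!: b_path_singleton)
  ultimately show ?thesis unfolding path_system_def ordIso_iff_ordLeq by blast
qed

lemma witnesses_popular_iff:
  "witnesses_popular E indM indN I BM BN \<kappa> P K \<longleftrightarrow> path_system E indM indN BM BN \<kappa> P \<and>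
    (\<exists>\<D>. (\<forall>C\<in>\<D>. circuit E indM C) \<and> |\<D>| =o \<kappa> \<and> delta_system \<D> K \<and>
      (\<forall>C\<in>\<D>. C - K \<subseteq> I \<union> last ` P))"
  unfolding witnesses_popular_def delta_system_def by blast

lemma simultaneous_witnesses:
  fixes S :: "'s set" and Os :: "'a set set"
  assumes M: "finitary_matroid E indM" and S: "infinite S"
    and X: "X \<subseteq> BN - BM" "\<And>U. |U| <o |S| \<Longrightarrow> X - U \<noteq> {}"
    and Os: "Os \<noteq> {}" "|Os| \<le>o |S|"
    and wit: "\<And>K. K \<in> Os \<Longrightarrow> \<exists>P. witnesses_popular E indM indN I BM BN |S| P K"
  shows "\<exists>P. path_system E indM indN BM BN |S| P \<and>
    (\<forall>K\<in>Os. witnesses_popular E indM indN I BM BN |S| P K)"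
proof -
  obtain task where task: "task ` S \<subseteq> Os" "\<And>K. K \<in> Os \<Longrightarrow> |S| \<le>o |{s \<in> S. task s = K}|"
    using exists_map_with_large_fibres[OF S Os] by blast
  have "\<forall>K\<in>Os. \<exists>W \<D>. path_system E indM indN BM BN |S| W \<and> (\<forall>C\<in>\<D>. circuit E indM C) \<and>
      |\<D>| =o |S| \<and> delta_system \<D> K \<and> (\<forall>C\<in>\<D>. C - K \<subseteq> I \<union> last ` W)"
    using wit unfolding witnesses_popular_iff by blast
  then obtain W \<D> where W: "\<And>K. K \<in> Os \<Longrightarrow> path_system E indM indN BM BN |S| (W K)"
    and D: "\<And>K. K \<in> Os \<Longrightarrow> (\<forall>C\<in>\<D> K. circuit E indM C) \<and> |\<D> K| =o |S| \<and>
      delta_system (\<D> K) K \<and> (\<forall>C\<in>\<D> K. C - K \<subseteq> I \<union> last ` W K)"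
    by metis
  have FS: "Field |S| = S" by (rule Field_card_of)
  have stage: "task s \<in> Os" if "s \<in> S" for s using task(1) that by blast
  have W_paths: "[] \<notin> W (task s)" "vertex_disjoint (W (task s))" if "s \<in> S" for s
    using W[OF stage[OF that]] unfolding path_system_def b_path_def by auto
  have D_large: "|S| \<le>o |\<D> (task s)|" if "s \<in> S" for s
    using D[OF stage[OF that]] ordIso_symmetric ordIso_imp_ordLeq by blast
  have D_delta: "delta_system (\<D> (task s)) (task s)" if "s \<in> S" for s
    using D[OF stage[OF that]] by blast
  have D_fin: "finite C" if "s \<in> S" "C \<in> \<D> (task s)" for s C
    using D[OF stage[OF that(1)]] that(2) circuit_finite[OF M] by blast
  have D_petals: "C - task s \<subseteq> I \<union> last ` W (task s)" if "s \<in> S" "C \<in> \<D> (task s)" for s C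
    using D[OF stage[OF that(1)]] that(2) by blast
  obtain C Q e where
    sel: "\<And>s. s \<in> S \<Longrightarrow> C s \<in> \<D> (task s) \<and> Q s \<subseteq> W (task s) \<and> finite (Q s) \<and>
       C s - task s \<subseteq> I \<union> last ` Q s \<and> e s \<in> X \<and> e s \<notin> vertices (Q s)"
    and apart: "\<And>s t. s \<in> S \<Longrightarrow> t \<in> S \<Longrightarrow> s \<noteq> t \<Longrightarrow>
       C s \<noteq> C t \<and> insert (e s) (vertices (Q s)) \<inter> insert (e t) (vertices (Q t)) = {}"
    by (rule transfinite_delta_selection[where r = "|S|" and P = "\<lambda>s. W (task s)"
        and \<D> = "\<lambda>s. \<D> (task s)" and K = task, unfolded FS])
      (assumption | rule card_of_card_order_on S X(2) W_paths D_large D_delta D_fin D_petals | blast)+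
  define P where "P = (\<Union>s\<in>S. insert [e s] (Q s))"
  have P: "path_system E indM indN BM BN |S| P"
    unfolding P_def
  proof (rule path_system_fresh_union[OF S])
    fix s assume s: "s \<in> S"
    show "e s \<in> BN - BM \<and> e s \<notin> vertices (Q s)"
      using sel[OF s] X(1) by blast
    show "(\<forall>p\<in>Q s. b_path E indM indN BM BN p) \<and> vertex_disjoint (Q s) \<and> finite (Q s)"
      using sel[OF s] W[OF stage[OF s]] unfolding path_system_def by blast
  next
    fix s t assume "s \<in> S" "t \<in> S" "s \<noteq> t"
    then show "insert (e s) (vertices (Q s)) \<inter> insert (e t) (vertices (Q t)) = {}"
      using apart by blast
  qed
  have "witnesses_popular E indM indN I BM BN |S| P K" if K: "K \<in> Os" for K
  proof -
    let ?F = "{s \<in> S. task s = K}"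
    have "inj_on C ?F" using apart by (auto simp: inj_on_def)
    then have "|C ` ?F| =o |?F|"
      by (rule ordIso_symmetric[OF card_of_ordIsoI[OF inj_on_imp_bij_betw]])
    moreover have "|?F| \<le>o |S|" by (rule card_of_mono1) blast
    then have "|?F| =o |S|"
      unfolding ordIso_iff_ordLeq using task(2)[OF K] by blast
    ultimately have card: "|C ` ?F| =o |S|" by (rule ordIso_transitive)
    have sub: "C ` ?F \<subseteq> \<D> K" using sel by auto
    have "\<forall>D\<in>C ` ?F. circuit E indM D"
      using sub D[OF K] by blast
    moreover have "delta_system (C ` ?F) K"
      using D[OF K] sub by (blast intro: delta_system_subset)
    moreover have "\<forall>D\<in>C ` ?F. D - K \<subseteq> I \<union> last ` P"
      using sel unfolding P_def by blast
    ultimately show ?thesis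
      unfolding witnesses_popular_iff using P card by blast
  qed
  with P show ?thesis by blast
qed

theorem mainTheorem13:
  fixes E :: "'a set" and indM indN :: "'a set \<Rightarrow> bool" and I JM JN :: "'a set"
  assumes M: "finitary_matroid E indM"
    and N: "finitary_matroid E indN"
    and I_common: "indM I \<and> indN I"
    and I_max: "\<forall>X. indM X \<and> indN X \<and> I \<subseteq> X \<longrightarrow> X = I"
    and JM: "base (contract_ind indM I) JM"
    and JN: "base (contract_ind indN I) JN"
    and uncountable: "(card_of JN, card_of (UNIV :: nat set)) \<notin> ordLeq"
    and regular: "regularCard (card_of JN)"
    and small: "(card_of JM, card_of JN) \<in> ordLess"
  shows "\<forall>Os. (\<forall>K\<in>Os. popular E indM indN I (I \<union> JM) (I \<union> JN) (card_of JN) K) \<and>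
              (card_of Os, card_of JN) \<in> ordLeq \<longrightarrow>
            (\<exists>P. path_system E indM indN (I \<union> JM) (I \<union> JN) (card_of JN) P \<and>
                 (\<forall>K\<in>Os. witnesses_popular E indM indN I (I \<union> JM) (I \<union> JN) (card_of JN) P K))"
proof (intro allI impI)
  fix Os :: "'a set set"
  assume Os: "(\<forall>K\<in>Os. popular E indM indN I (I \<union> JM) (I \<union> JN) (card_of JN) K) \<and>
    |Os| \<le>o |JN|"
  have "JN \<inter> I = {}" using JN unfolding base_def contract_ind_def by blast
  then have X: "JN - JM \<subseteq> (I \<union> JN) - (I \<union> JM)" by blast
  have JN_inf: "infinite JN"
    using uncountable finite_ordLess_infinite_Field[OF card_of_Card_order, of "UNIV :: nat set"]
      ordLess_imp_ordLeq by (auto simp: Field_card_of)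
  have fresh: "(JN - JM) - U \<noteq> {}" if "|U| <o |JN|" for U
    using Diff_nonempty_if_ordLess[OF card_of_Un_ordLess_infinite[OF JN_inf small that]] by blast
  show "\<exists>P. path_system E indM indN (I \<union> JM) (I \<union> JN) |JN| P \<and>
    (\<forall>K\<in>Os. witnesses_popular E indM indN I (I \<union> JM) (I \<union> JN) |JN| P K)"
  proof (cases "Os = {}")
    case True
    then show ?thesis
      using path_system_singletons[OF X card_of_ordIso_if_Diff_nonempty[OF Diff_subset fresh]]
      by blast
  next
    case False
    then show ?thesis
      using simultaneous_witnesses[OF M JN_inf X fresh False] Os unfolding popular_def by blast
  qed
qed

end
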